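(* Let $X$ be a Banach space, $\Omega\in L(X)$ an isomorphism of $X$ onto itself, $\tau>0$, $\varphi\in C^{2}([-2\tau,0],X)$ and $f\in C^{0}([0,\infty),X)$. Then the unique classical solution of $$\ddot x(t)-\Omega^{2}x(t-2\tau)=f(t)\ (t\ge0),\qquad x(t)=\varphi(t)\ (t\in[-2\tau,0])$$ is, for $t\in[-2\tau,\infty)$, $$x(t)=x_1(t+\tau;\Omega)\varphi(-2\tau)+x_2(t+2\tau;\Omega)\dot\varphi(-2\tau)+\int_{-2\tau}^{0}x_2(t-s;\Omega)\ddot\varphi(s)\,ds+\begin{cases}0,& t\in[-2\tau,0),\\ \int_0^t x_2(t-s;\Omega)f(s)\,ds,& t\ge0.\end{cases}$$
   Context: For $A\in L(X)$, $\exp_\tau(t;A)=0$ for $t<-\tau$, $=\mathrm{id}_X$ for $-\tau\le t<0$, and $=\sum_{j=0}^{k}A^{j}\frac{(t-(j-1)\tau)^{j}}{j!}$ for $(k-1)\tau\le t<k\tau$, $k\in\mathbb N$. For $t\in\mathbb R$, $x_1(t;\Omega):=\tfrac12(\exp_\tau(t;\Omega)+\exp_\tau(t;-\Omega))$ and $x_2(t;\Omega):=\tfrac12\Omega^{-1}(\exp_\tau(t;\Omega)-\exp_\tau(t;-\Omega))$; in particular $x_2(t;\Omega)=0$ for $t<0$. A classical solution is a function $x\in C^{1}([-2\tau,\infty),X)\cap C^{2}([-2\tau,0],X)\cap C^{2}([0,\infty),X)$ (one-sided derivatives at endpoints) satisfying the equations pointwise. *)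

theory Defs
  imports "HOL-Analysis.Analysis"
begin

primrec blpow :: "('a::real_normed_vector \<Rightarrow>\<^sub>L 'a) \<Rightarrow> nat \<Rightarrow> ('a \<Rightarrow>\<^sub>L 'a)" where
  "blpow A 0 = id_blinfun"
| "blpow A (Suc n) = A o\<^sub>L blpow A n"

definition is_iso :: "('a::real_normed_vector \<Rightarrow>\<^sub>L 'a) \<Rightarrow> bool" where
  "is_iso A \<longleftrightarrow> (\<exists>B. A o\<^sub>L B = id_blinfun \<and> B o\<^sub>L A = id_blinfun)"

definition blinv :: "('a::real_normed_vector \<Rightarrow>\<^sub>L 'a) \<Rightarrow> ('a \<Rightarrow>\<^sub>L 'a)" where
  "blinv A = (SOME B. A o\<^sub>L B = id_blinfun \<and> B o\<^sub>L A = id_blinfun)"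

(* delayed exponential exp_tau(t;A); for t \<ge> 0 the index k \<in> \<nat> with (k-1)\<tau> \<le> t < k\<tau>
   is k = \<lfloor>t/\<tau>\<rfloor> + 1 *)
definition exp_tau :: "real \<Rightarrow> ('a::real_normed_vector \<Rightarrow>\<^sub>L 'a) \<Rightarrow> real \<Rightarrow> ('a \<Rightarrow>\<^sub>L 'a)" where
  "exp_tau \<tau> A t =
     (if t < - \<tau> then 0
      else if t < 0 then id_blinfun
      else (let k = nat \<lfloor>t / \<tau>\<rfloor> + 1 in
            \<Sum>j\<in>{0..k}. ((t - (real j - 1) * \<tau>) ^ j / fact j) *\<^sub>R blpow A j))"

definition x1 :: "real \<Rightarrow> ('a::real_normed_vector \<Rightarrow>\<^sub>L 'a) \<Rightarrow> real \<Rightarrow> ('a \<Rightarrow>\<^sub>L 'a)" where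
  "x1 \<tau> \<Omega> t = (1/2) *\<^sub>R (exp_tau \<tau> \<Omega> t + exp_tau \<tau> (- \<Omega>) t)"

definition x2 :: "real \<Rightarrow> ('a::real_normed_vector \<Rightarrow>\<^sub>L 'a) \<Rightarrow> real \<Rightarrow> ('a \<Rightarrow>\<^sub>L 'a)" where
  "x2 \<tau> \<Omega> t = (1/2) *\<^sub>R (blinv \<Omega> o\<^sub>L (exp_tau \<tau> \<Omega> t - exp_tau \<tau> (- \<Omega>) t))"

(* classical solution of  x''(t) - \<Omega>^2 x(t-2\<tau>) = f(t) (t \<ge> 0),  x = \<phi> on [-2\<tau>,0]:
   x \<in> C^1([-2\<tau>,\<infinity>)) \<inter> C^2([-2\<tau>,0]) \<inter> C^2([0,\<infinity>)), one-sided derivatives at endpoints *)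
definition classical_solution ::
  "real \<Rightarrow> ('a::real_normed_vector \<Rightarrow>\<^sub>L 'a) \<Rightarrow> (real \<Rightarrow> 'a) \<Rightarrow> (real \<Rightarrow> 'a) \<Rightarrow> (real \<Rightarrow> 'a) \<Rightarrow> bool" where
  "classical_solution \<tau> \<Omega> \<phi> f x \<longleftrightarrow>
     (\<exists>x' xl xr.
        (\<forall>t\<in>{-2*\<tau>..}. (x has_vector_derivative x' t) (at t within {-2*\<tau>..})) \<and>
        continuous_on {-2*\<tau>..} x' \<and>
        (\<forall>t\<in>{-2*\<tau>..0}. (x' has_vector_derivative xl t) (at t within {-2*\<tau>..0})) \<and>
        continuous_on {-2*\<tau>..0} xl \<and>
        (\<forall>t\<in>{0..}. (x' has_vector_derivative xr t) (at t within {0..})) \<and>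
        continuous_on {0..} xr \<and>
        (\<forall>t\<in>{0..}. xr t - \<Omega> (\<Omega> (x (t - 2*\<tau>))) = f t) \<and>
        (\<forall>t\<in>{-2*\<tau>..0}. x t = \<phi> t))"

end

theory Submission
  imports Defs
begin

text \<open>The delayed exponential satisfies \<open>exp\<^sub>\<tau>'(t) = A exp\<^sub>\<tau>(t - \<tau>)\<close> for \<open>t \<ge> 0\<close>,
  hence \<open>x\<^sub>2' = x\<^sub>1(\<cdot> - \<tau>)\<close> and \<open>x\<^sub>1' = \<Omega>\<^sup>2 x\<^sub>2(\<cdot> - \<tau>)\<close>, while
  \<open>x\<^sub>2 = 0\<close> on \<open>(-\<infinity>, 0]\<close> and \<open>x\<^sub>1 = id\<close> on \<open>[-\<tau>, \<tau>]\<close>. So \<open>x\<^sub>2(\<cdot> - s)\<close> is the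
  fundamental solution of \<open>x''(t) = \<Omega>\<^sup>2 x(t - 2\<tau>)\<close> started at time \<open>s\<close>, and differentiating
  the formula twice under the integral sign (Duhamel's principle) shows that it solves the
  equation; on \<open>[-2\<tau>, 0]\<close> it reduces to the Taylor expansion of \<open>\<phi>\<close> at \<open>-2\<tau>\<close>.
  Uniqueness follows by the method of steps: the difference of two solutions has zero history,
  and on each interval \<open>[2n\<tau>, 2(n+1)\<tau>]\<close> its second derivative is \<open>\<Omega>\<^sup>2\<close> applied to
  its values one delay earlier, which already vanish.\<close>

section \<open>Calculus on the real line\<close>

lemma has_vector_derivative_within_nonlimpt:
  assumes "\<not> x islimpt S"
  shows "(f has_vector_derivative D) (at x within S)"
proof -
  have "at x within S = bot" using assms trivial_limit_within by blast
  then show ?thesis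
    by (simp add: has_vector_derivative_def has_derivative_def bounded_linear_scaleR_left)
qed

lemma has_vector_derivative_within_Un:
  assumes "(f has_vector_derivative D) (at x within S)"
    and "(f has_vector_derivative D) (at x within T)"
  shows "(f has_vector_derivative D) (at x within (S \<union> T))"
  using assms unfolding has_vector_derivative_def has_derivative_within
  by (auto simp: Lim_within_Un)

lemma has_vector_derivative_at_split:
  fixes c :: real
  assumes "(f has_vector_derivative D) (at x within {..c})"
    and "(f has_vector_derivative D) (at x within {c..})"
  shows "(f has_vector_derivative D) (at x)"
proof -
  have "{..c} \<union> {c..} = (UNIV::real set)" by auto
  with has_vector_derivative_within_Un[OF assms] show ?thesis by simp
qed

lemma has_vector_derivative_shift:
  assumes "(F has_vector_derivative D) (at (w + c) within S)"
    and "(\<lambda>y. y + c) ` T \<subseteq> S"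
  shows "((\<lambda>w. F (w + c)) has_vector_derivative D) (at w within T)"
proof -
  have a: "((\<lambda>y. y + c) has_vector_derivative 1) (at w within T)"
    by (auto intro!: derivative_eq_intros)
  have b: "(F has_vector_derivative D) (at ((\<lambda>y. y + c) w) within (\<lambda>y. y + c) ` T)"
    using assms has_vector_derivative_within_subset by fastforce
  show ?thesis using vector_diff_chain_within[OF a b] by (simp add: o_def)
qed

lemma has_vector_derivative_blinfun_apply:
  fixes A :: "real \<Rightarrow> 'a::real_normed_vector \<Rightarrow>\<^sub>L 'b::real_normed_vector"
  assumes "(A has_vector_derivative A') F"
  shows "((\<lambda>t. A t v) has_vector_derivative A' v) F"
  by (rule bounded_linear.has_vector_derivative[OF blinfun.bounded_linear_left assms])

lemma has_vector_derivative_zero_imp_zero: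
  fixes f :: "real \<Rightarrow> 'a::real_normed_vector"
  assumes "\<And>s. s \<in> {a..b} \<Longrightarrow> (f has_vector_derivative 0) (at s within {a..b})"
    and "f a = 0" and "t \<in> {a..b}"
  shows "f t = 0"
proof -
  obtain c where "\<And>s. s \<in> {a..b} \<Longrightarrow> f s = c"
    using has_vector_derivative_zero_constant[of "{a..b}" f] assms(1) by blast
  moreover have "a \<in> {a..b}" using assms(3) by auto
  ultimately show ?thesis using assms(2,3) by auto
qed

lemma has_vector_derivative_vanishing_right_end:
  fixes d :: "real \<Rightarrow> 'a::real_normed_vector"
  assumes "(d has_vector_derivative D) (at b within {a..b})" "a < b"
    and "\<And>t. t \<in> {a..b} \<Longrightarrow> d t = 0"
  shows "D = 0"
proof -
  have "(d has_vector_derivative 0) (at b within {a..b})"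
    using assms by (intro has_vector_derivative_transform[OF _ _ has_vector_derivative_const[of 0]])
      auto
  then show ?thesis
    using vector_derivative_unique_within_closed_interval[of a b b d D 0] assms
    by (simp add: cbox_interval)
qed

section \<open>The delayed exponential\<close>

definition trunc_pow :: "nat \<Rightarrow> real \<Rightarrow> real" where
  "trunc_pow j u = (max 0 u) ^ j / fact j"

lemma trunc_pow_0 [simp]: "trunc_pow 0 u = 1"
  by (simp add: trunc_pow_def)

lemma trunc_pow_nonpos: "u \<le> 0 \<Longrightarrow> j \<ge> 1 \<Longrightarrow> trunc_pow j u = 0"
  by (simp add: trunc_pow_def max_def)

lemma trunc_pow_nonneg: "u \<ge> 0 \<Longrightarrow> trunc_pow j u = u ^ j / fact j"
  by (simp add: trunc_pow_def max_def)

lemma trunc_pow_has_derivative_within_nonneg: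
  assumes "j \<ge> 1" "u \<ge> 0"
  shows "(trunc_pow j has_real_derivative trunc_pow (j - 1) u) (at u within {0..})"
proof -
  have d: "((\<lambda>u. u ^ j / fact j) has_real_derivative real j * u ^ (j - 1) / fact j) (at u within {0..})"
    by (auto intro!: derivative_eq_intros)
  have e: "real j * u ^ (j - 1) / fact j = trunc_pow (j - 1) u"
    using assms by (cases j) (auto simp: trunc_pow_nonneg)
  show ?thesis
    using d unfolding e
    by (rule has_field_derivative_transform_within[where d=1]) (auto simp: trunc_pow_nonneg assms)
qed

lemma trunc_pow_has_derivative:
  assumes "j \<ge> 2"
  shows "(trunc_pow j has_real_derivative trunc_pow (j - 1) u) (at u)"
proof -
  have right: "(trunc_pow j has_vector_derivative trunc_pow (j - 1) u) (at u within {0..})"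
  proof (cases "u \<ge> 0")
    case True
    then show ?thesis using trunc_pow_has_derivative_within_nonneg[of j u] assms
      by (simp add: has_real_derivative_iff_has_vector_derivative)
  qed (auto intro: has_vector_derivative_within_nonlimpt simp: islimpt_in_closure)
  have left: "(trunc_pow j has_vector_derivative trunc_pow (j - 1) u) (at u within {..0})"
  proof (cases "u \<le> 0")
    case True
    have "((\<lambda>_. 0::real) has_vector_derivative 0) (at u within {..0})"
      by (rule has_vector_derivative_const)
    then show ?thesis using True assms
      by (rule_tac has_vector_derivative_transform[where f="\<lambda>_. 0"]) (auto simp: trunc_pow_nonpos)
  qed (auto intro: has_vector_derivative_within_nonlimpt simp: islimpt_in_closure)
  show ?thesis
    using has_vector_derivative_at_split[OF left right]
    by (simp add: has_real_derivative_iff_has_vector_derivative)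
qed

lemma trunc_pow_shift_has_derivative_within_nonneg:
  assumes "j \<ge> 1" "w \<ge> 0" "j \<ge> 2 \<or> c = 0"
  shows "((\<lambda>w. trunc_pow j (w - c)) has_real_derivative trunc_pow (j - 1) (w - c)) (at w within {0..})"
proof (cases "j \<ge> 2")
  case True
  have "((\<lambda>w. trunc_pow j (w - c)) has_real_derivative trunc_pow (j - 1) (w - c) * 1) (at w)"
    by (rule DERIV_chain2[OF trunc_pow_has_derivative[OF True]]) (auto intro!: derivative_eq_intros)
  then show ?thesis by (simp add: has_field_derivative_at_within)
next
  case False
  then have "j = 1" "c = 0" using assms by auto
  then show ?thesis using trunc_pow_has_derivative_within_nonneg[of 1 w] assms by simp
qed

text \<open>On any window \<open>[-\<tau>, N\<tau>)\<close> the delayed exponential is one fixed polynomial-like sum,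
  because the summands beyond the current step vanish as truncated powers.\<close>

definition exp_tau_sum :: "real \<Rightarrow> ('a::real_normed_vector \<Rightarrow>\<^sub>L 'a) \<Rightarrow> nat \<Rightarrow> real \<Rightarrow> ('a \<Rightarrow>\<^sub>L 'a)" where
  "exp_tau_sum \<tau> A N w = (\<Sum>j\<in>{0..N}. trunc_pow j (w - (real j - 1) * \<tau>) *\<^sub>R blpow A j)"

lemma exp_tau_eq_sum_neg:
  assumes "\<tau> > 0" "- \<tau> \<le> w" "w < 0"
  shows "exp_tau \<tau> A w = exp_tau_sum \<tau> A N w"
proof -
  have "exp_tau_sum \<tau> A N w = (\<Sum>j\<in>{0}. trunc_pow j (w - (real j - 1) * \<tau>) *\<^sub>R blpow A j)"
    unfolding exp_tau_sum_def
  proof (rule sum.mono_neutral_right)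
    show "\<forall>i\<in>{0..N} - {0}. trunc_pow i (w - (real i - 1) * \<tau>) *\<^sub>R blpow A i = 0"
    proof
      fix i assume i: "i \<in> {0..N} - {0}"
      then have "(real i - 1) * \<tau> \<ge> 0" using assms by simp
      then have "w - (real i - 1) * \<tau> \<le> 0" using assms by linarith
      then show "trunc_pow i (w - (real i - 1) * \<tau>) *\<^sub>R blpow A i = 0"
        using i by (simp add: trunc_pow_nonpos)
    qed
  qed auto
  then show ?thesis using assms by (simp add: exp_tau_def)
qed

lemma exp_tau_eq_sum_nonneg:
  assumes tau: "\<tau> > 0" and w: "0 \<le> w" "w < real N * \<tau>"
  shows "exp_tau \<tau> A w = exp_tau_sum \<tau> A N w"
proof -
  define k where "k = nat \<lfloor>w / \<tau>\<rfloor> + 1"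
  have k: "real k = real_of_int \<lfloor>w / \<tau>\<rfloor> + 1"
    using w tau by (simp add: k_def)
  have below: "real_of_int \<lfloor>w / \<tau>\<rfloor> * \<tau> \<le> w"
    using tau by (rule floor_divide_lower)
  have above: "w < (real_of_int \<lfloor>w / \<tau>\<rfloor> + 1) * \<tau>"
    using tau by (rule floor_divide_upper)
  have "real_of_int \<lfloor>w / \<tau>\<rfloor> * \<tau> < real N * \<tau>" using below w by linarith
  then have kN: "k \<le> N" using k tau by simp
  have "exp_tau \<tau> A w = (\<Sum>j\<in>{0..k}. ((w - (real j - 1) * \<tau>) ^ j / fact j) *\<^sub>R blpow A j)"
    using w tau by (simp add: exp_tau_def k_def Let_def)
  also have "\<dots> = (\<Sum>j\<in>{0..k}. trunc_pow j (w - (real j - 1) * \<tau>) *\<^sub>R blpow A j)"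
  proof (rule sum.cong[OF refl])
    fix j assume "j \<in> {0..k}"
    then have "(real j - 1) * \<tau> \<le> real_of_int \<lfloor>w / \<tau>\<rfloor> * \<tau>"
      using k tau by (intro mult_right_mono) auto
    then show "((w - (real j - 1) * \<tau>) ^ j / fact j) *\<^sub>R blpow A j
        = trunc_pow j (w - (real j - 1) * \<tau>) *\<^sub>R blpow A j"
      using below by (simp add: trunc_pow_nonneg)
  qed
  also have "\<dots> = exp_tau_sum \<tau> A N w"
    unfolding exp_tau_sum_def
  proof (rule sum.mono_neutral_left)
    show "\<forall>i\<in>{0..N} - {0..k}. trunc_pow i (w - (real i - 1) * \<tau>) *\<^sub>R blpow A i = 0"
    proof
      fix i assume i: "i \<in> {0..N} - {0..k}"
      then have "real k * \<tau> \<le> (real i - 1) * \<tau>" using tau by (intro mult_right_mono) auto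
      then have "w - (real i - 1) * \<tau> \<le> 0" using above k by (simp add: algebra_simps)
      then show "trunc_pow i (w - (real i - 1) * \<tau>) *\<^sub>R blpow A i = 0"
        using i by (simp add: trunc_pow_nonpos)
    qed
  qed (use kN in auto)
  finally show ?thesis .
qed

lemma exp_tau_eq_sum:
  assumes "\<tau> > 0" "- \<tau> \<le> w" "w < real N * \<tau>"
  shows "exp_tau \<tau> A w = exp_tau_sum \<tau> A N w"
  using assms exp_tau_eq_sum_neg exp_tau_eq_sum_nonneg by (metis not_le)

lemma exp_tau_sum_has_vector_derivative:
  assumes tau: "\<tau> > 0" and w: "w \<ge> 0"
  shows "(exp_tau_sum \<tau> A (Suc N) has_vector_derivative A o\<^sub>L exp_tau_sum \<tau> A N (w - \<tau>))
           (at w within {0..})"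
proof -
  have split: "exp_tau_sum \<tau> A (Suc N) =
      (\<lambda>w. id_blinfun + (\<Sum>j\<in>{0..N}. trunc_pow (Suc j) (w - real j * \<tau>) *\<^sub>R blpow A (Suc j)))"
    unfolding exp_tau_sum_def by (subst sum.atLeast0_atMost_Suc_shift) simp
  have "((\<lambda>w. id_blinfun + (\<Sum>j\<in>{0..N}. trunc_pow (Suc j) (w - real j * \<tau>) *\<^sub>R blpow A (Suc j)))
     has_vector_derivative 0 + (\<Sum>j\<in>{0..N}. trunc_pow j (w - real j * \<tau>) *\<^sub>R blpow A (Suc j)))
     (at w within {0..})"
  proof (intro has_vector_derivative_add has_vector_derivative_const has_vector_derivative_sum)
    fix j assume "j \<in> {0..N}"
    have "((\<lambda>w. trunc_pow (Suc j) (w - real j * \<tau>)) has_real_derivative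
        trunc_pow (Suc j - 1) (w - real j * \<tau>)) (at w within {0..})"
      by (rule trunc_pow_shift_has_derivative_within_nonneg) (use tau w in auto)
    then show "((\<lambda>w. trunc_pow (Suc j) (w - real j * \<tau>) *\<^sub>R blpow A (Suc j)) has_vector_derivative
        trunc_pow j (w - real j * \<tau>) *\<^sub>R blpow A (Suc j)) (at w within {0..})"
      using has_vector_derivative_scaleR[OF _ has_vector_derivative_const] by fastforce
  qed
  moreover have "(\<Sum>j\<in>{0..N}. trunc_pow j (w - real j * \<tau>) *\<^sub>R blpow A (Suc j))
      = A o\<^sub>L exp_tau_sum \<tau> A N (w - \<tau>)"
    unfolding exp_tau_sum_def
    by (simp add: bounded_bilinear.sum_right[OF bounded_bilinear_blinfun_compose]
        bounded_bilinear.scaleR_right[OF bounded_bilinear_blinfun_compose] algebra_simps)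
  ultimately show ?thesis by (simp add: split)
qed

lemma exp_tau_has_vector_derivative:
  assumes tau: "\<tau> > 0" and w: "w \<ge> 0"
  shows "(exp_tau \<tau> A has_vector_derivative A o\<^sub>L exp_tau \<tau> A (w - \<tau>)) (at w within {0..})"
proof -
  obtain N :: nat where N: "real N > (w + 1) / \<tau> + 1" using reals_Archimedean2 by blast
  then have N\<tau>: "real N * \<tau> > w + 1 + \<tau>" using tau by (simp add: field_simps)
  have "(w + 1) / \<tau> \<ge> 0" using w tau by simp
  then have "N > 0" using N by linarith
  then obtain M where M: "N = Suc M" using gr0_implies_Suc by blast
  have d: "(exp_tau_sum \<tau> A (Suc M) has_vector_derivative A o\<^sub>L exp_tau_sum \<tau> A M (w - \<tau>))
      (at w within {0..})"
    by (rule exp_tau_sum_has_vector_derivative[OF tau w])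
  have e: "exp_tau_sum \<tau> A M (w - \<tau>) = exp_tau \<tau> A (w - \<tau>)"
    using N\<tau> M w tau by (subst exp_tau_eq_sum) (auto simp: algebra_simps)
  show ?thesis
    using d unfolding e
    by (rule has_vector_derivative_transform_within[where d=1])
       (use N\<tau> M w tau in \<open>auto simp: dist_real_def intro!: exp_tau_eq_sum[symmetric]\<close>)
qed

lemma exp_tau_first_step:
  assumes "\<tau> > 0" "0 \<le> w" "w \<le> \<tau>"
  shows "exp_tau \<tau> A w = id_blinfun + w *\<^sub>R A"
proof -
  have "blpow A 1 = A" by (rule blinfun_eqI) simp
  moreover have "exp_tau \<tau> A w = exp_tau_sum \<tau> A 2 w" using assms by (intro exp_tau_eq_sum) auto
  ultimately show ?thesis
    using assms by (simp add: exp_tau_sum_def numeral_2_eq_2 trunc_pow_nonneg trunc_pow_nonpos)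
qed

lemma is_iso_blinv:
  assumes "is_iso A"
  shows "A o\<^sub>L blinv A = id_blinfun" "blinv A o\<^sub>L A = id_blinfun"
proof -
  have "A o\<^sub>L blinv A = id_blinfun \<and> blinv A o\<^sub>L A = id_blinfun"
    using assms unfolding is_iso_def blinv_def by (rule someI_ex)
  then show "A o\<^sub>L blinv A = id_blinfun" "blinv A o\<^sub>L A = id_blinfun" by auto
qed

lemma is_iso_blinv_apply:
  assumes "is_iso A"
  shows "A (blinv A v) = v" "blinv A (A v) = v"
  using is_iso_blinv[OF assms]
  by (metis blinfun_apply_blinfun_compose blinfun_apply_id_blinfun id_apply)+

lemma x2_nonpos:
  assumes "\<tau> > 0" "w \<le> 0"
  shows "x2 \<tau> \<Omega> w = 0"
proof (cases "w = 0")
  case True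
  then show ?thesis using assms by (simp add: x2_def exp_tau_first_step)
qed (use assms in \<open>simp add: x2_def exp_tau_def\<close>)

lemma x1_eq_id:
  assumes "\<tau> > 0" "- \<tau> \<le> w" "w \<le> \<tau>"
  shows "x1 \<tau> \<Omega> w = id_blinfun"
proof (cases "w < 0")
  case True
  then show ?thesis using assms by (simp add: x1_def exp_tau_def scaleR_2[symmetric] del: scaleR_2)
qed (use assms in \<open>simp add: x1_def exp_tau_first_step\<close>)

lemmas blinfun_linear_simps = blinfun.diff_right blinfun.add_right blinfun.scaleR_right
  blinfun.minus_right blinfun.diff_left blinfun.add_left blinfun.scaleR_left blinfun.minus_left

lemma x2_has_vector_derivative:
  assumes iso: "is_iso \<Omega>" and tau: "\<tau> > 0" and w: "w \<ge> 0"
  shows "(x2 \<tau> \<Omega> has_vector_derivative x1 \<tau> \<Omega> (w - \<tau>)) (at w within {0..})"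
proof -
  have "((\<lambda>w. exp_tau \<tau> \<Omega> w - exp_tau \<tau> (- \<Omega>) w) has_vector_derivative
     (\<Omega> o\<^sub>L exp_tau \<tau> \<Omega> (w - \<tau>)) - ((- \<Omega>) o\<^sub>L exp_tau \<tau> (- \<Omega>) (w - \<tau>))) (at w within {0..})"
    by (intro has_vector_derivative_diff exp_tau_has_vector_derivative tau w)
  moreover have "bounded_linear (\<lambda>X. (1/2) *\<^sub>R (blinv \<Omega> o\<^sub>L X))"
    by (intro bounded_linear_compose[OF bounded_linear_scaleR_right]
        bounded_bilinear.bounded_linear_right[OF bounded_bilinear_blinfun_compose])
  ultimately have "(x2 \<tau> \<Omega> has_vector_derivative
      (1/2) *\<^sub>R (blinv \<Omega> o\<^sub>L ((\<Omega> o\<^sub>L exp_tau \<tau> \<Omega> (w - \<tau>)) - ((- \<Omega>) o\<^sub>L exp_tau \<tau> (- \<Omega>) (w - \<tau>)))))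
      (at w within {0..})"
    unfolding x2_def[abs_def] by (rule bounded_linear.has_vector_derivative[rotated])
  moreover have "(1/2) *\<^sub>R (blinv \<Omega> o\<^sub>L ((\<Omega> o\<^sub>L exp_tau \<tau> \<Omega> (w - \<tau>))
      - ((- \<Omega>) o\<^sub>L exp_tau \<tau> (- \<Omega>) (w - \<tau>)))) = x1 \<tau> \<Omega> (w - \<tau>)"
    by (rule blinfun_eqI) (simp add: x1_def blinfun_linear_simps is_iso_blinv_apply[OF iso])
  ultimately show ?thesis by simp
qed

lemma x1_has_vector_derivative:
  assumes iso: "is_iso \<Omega>" and tau: "\<tau> > 0" and w: "w \<ge> 0"
  shows "(x1 \<tau> \<Omega> has_vector_derivative \<Omega> o\<^sub>L \<Omega> o\<^sub>L x2 \<tau> \<Omega> (w - \<tau>)) (at w within {0..})"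
proof -
  have "((\<lambda>w. exp_tau \<tau> \<Omega> w + exp_tau \<tau> (- \<Omega>) w) has_vector_derivative
     (\<Omega> o\<^sub>L exp_tau \<tau> \<Omega> (w - \<tau>)) + ((- \<Omega>) o\<^sub>L exp_tau \<tau> (- \<Omega>) (w - \<tau>))) (at w within {0..})"
    by (intro has_vector_derivative_add exp_tau_has_vector_derivative tau w)
  then have "(x1 \<tau> \<Omega> has_vector_derivative
      (1/2) *\<^sub>R ((\<Omega> o\<^sub>L exp_tau \<tau> \<Omega> (w - \<tau>)) + ((- \<Omega>) o\<^sub>L exp_tau \<tau> (- \<Omega>) (w - \<tau>))))
      (at w within {0..})"
    unfolding x1_def[abs_def] by (rule bounded_linear.has_vector_derivative[OF bounded_linear_scaleR_right])
  moreover have "(1/2) *\<^sub>R ((\<Omega> o\<^sub>L exp_tau \<tau> \<Omega> (w - \<tau>)) + ((- \<Omega>) o\<^sub>L exp_tau \<tau> (- \<Omega>) (w - \<tau>)))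
     = \<Omega> o\<^sub>L \<Omega> o\<^sub>L x2 \<tau> \<Omega> (w - \<tau>)"
    by (rule blinfun_eqI) (simp add: x2_def blinfun_linear_simps is_iso_blinv_apply[OF iso])
  ultimately show ?thesis by simp
qed

lemma x1_delayed_has_vector_derivative:
  assumes iso: "is_iso \<Omega>" and tau: "\<tau> > 0" and w: "w \<ge> 0"
  shows "((\<lambda>w. x1 \<tau> \<Omega> (w - \<tau>)) has_vector_derivative \<Omega> o\<^sub>L \<Omega> o\<^sub>L x2 \<tau> \<Omega> (w - 2 * \<tau>))
     (at w within {0..})"
proof -
  have late: "((\<lambda>w. x1 \<tau> \<Omega> (w - \<tau>)) has_vector_derivative \<Omega> o\<^sub>L \<Omega> o\<^sub>L x2 \<tau> \<Omega> (w - 2 * \<tau>))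
     (at w within {\<tau>..})"
  proof (cases "w \<ge> \<tau>")
    case True
    have "(x1 \<tau> \<Omega> has_vector_derivative \<Omega> o\<^sub>L \<Omega> o\<^sub>L x2 \<tau> \<Omega> ((w + - \<tau>) - \<tau>))
        (at (w + - \<tau>) within {0..})"
      using x1_has_vector_derivative[OF iso tau, of "w + - \<tau>"] True by simp
    then have "((\<lambda>w. x1 \<tau> \<Omega> (w + - \<tau>)) has_vector_derivative
        \<Omega> o\<^sub>L \<Omega> o\<^sub>L x2 \<tau> \<Omega> ((w + - \<tau>) - \<tau>)) (at w within {\<tau>..})"
      by (rule has_vector_derivative_shift) auto
    then show ?thesis by (simp add: algebra_simps)
  qed (auto intro: has_vector_derivative_within_nonlimpt simp: islimpt_in_closure)
  have early: "((\<lambda>w. x1 \<tau> \<Omega> (w - \<tau>)) has_vector_derivative \<Omega> o\<^sub>L \<Omega> o\<^sub>L x2 \<tau> \<Omega> (w - 2 * \<tau>))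
     (at w within {0..\<tau>})"
  proof (cases "w \<le> \<tau>")
    case True
    have "((\<lambda>_. id_blinfun) has_vector_derivative 0) (at w within {0..\<tau>})" by simp
    moreover have "\<Omega> o\<^sub>L \<Omega> o\<^sub>L x2 \<tau> \<Omega> (w - 2 * \<tau>) = 0"
      using True tau by (simp add: x2_nonpos)
    ultimately show ?thesis
      by (rule_tac has_vector_derivative_transform[where f="\<lambda>_. id_blinfun"])
         (use True w tau in \<open>auto intro!: x1_eq_id\<close>)
  qed (auto intro: has_vector_derivative_within_nonlimpt simp: islimpt_in_closure)
  have "{0..\<tau>} \<union> {\<tau>..} = {0..}" using tau by auto
  then show ?thesis using has_vector_derivative_within_Un[OF early late] by simp
qed

lemma x2_continuous:
  assumes iso: "is_iso \<Omega>" and tau: "\<tau> > 0"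
  shows "continuous_on S (x2 \<tau> \<Omega>)"
proof -
  have "continuous_on {0..} (x2 \<tau> \<Omega>)"
    unfolding continuous_on_eq_continuous_within
    using x2_has_vector_derivative[OF iso tau] has_vector_derivative_continuous by blast
  moreover have "continuous_on {..0} (x2 \<tau> \<Omega>)"
    by (rule continuous_on_eq[OF continuous_on_const[of _ 0]]) (use tau x2_nonpos in auto)
  ultimately have "continuous_on ({..0} \<union> {0..}) (x2 \<tau> \<Omega>)"
    by (intro continuous_on_closed_Un) auto
  moreover have "{..0} \<union> {0..} = (UNIV :: real set)" by auto
  ultimately show ?thesis using continuous_on_subset by (metis subset_UNIV)
qed

lemma x1_delayed_continuous:
  assumes "is_iso \<Omega>" "\<tau> > 0"
  shows "continuous_on {0..} (\<lambda>w. x1 \<tau> \<Omega> (w - \<tau>))"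
  unfolding continuous_on_eq_continuous_within
  using x1_delayed_has_vector_derivative[OF assms] has_vector_derivative_continuous by blast

section \<open>Differentiating convolution integrals\<close>

lemma norm_integral_le_length:
  fixes h :: "real \<Rightarrow> 'a::banach"
  assumes "continuous_on {p..q} h" "p \<le> q" "\<And>s. s \<in> {p..q} \<Longrightarrow> norm (h s) \<le> B"
  shows "norm (integral {p..q} h) \<le> B * (q - p)"
proof -
  have "0 \<le> B" using assms(2) assms(3)[of p] by (meson atLeastAtMost_iff norm_ge_zero order.trans order_refl)
  moreover have "(h has_integral integral {p..q} h) {p..q}"
    using assms(1) by (intro integrable_integral integrable_continuous_interval)
  ultimately have "norm (integral {p..q} h) \<le> B * Henstock_Kurzweil_Integration.content {p..q}"
    using assms(3) by (intro has_integral_bound_real[OF _ finite.emptyI]) auto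
  then show ?thesis using assms(2) by simp
qed

lemma norm_integral_upper_diff_le:
  fixes h :: "real \<Rightarrow> 'a::banach"
  assumes "continuous_on {a..max y t} h" "a \<le> y" "a \<le> t"
    and "\<And>s. s \<in> {min y t..max y t} \<Longrightarrow> norm (h s) \<le> B"
  shows "norm (integral {a..y} h - integral {a..t} h) \<le> B * \<bar>y - t\<bar>"
proof -
  have combine: "integral {a..u} h + integral {u..v} h = integral {a..v} h"
    if "a \<le> u" "u \<le> v" "v \<le> max y t" for u v
    using that assms(1)
    by (intro Henstock_Kurzweil_Integration.integral_combine integrable_continuous_interval)
       (auto elim: continuous_on_subset)
  have bound: "norm (integral {u..v} h) \<le> B * (v - u)"
    if "a \<le> u" "u \<le> v" "v \<le> max y t" "{u..v} \<subseteq> {min y t..max y t}" for u v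
    using that assms by (intro norm_integral_le_length) (auto elim: continuous_on_subset)
  show ?thesis
  proof (cases "t \<le> y")
    case True
    then have "integral {a..y} h - integral {a..t} h = integral {t..y} h"
      using combine[of t y] assms by (simp add: algebra_simps)
    then show ?thesis using True bound[of t y] assms by simp
  next
    case False
    then have "integral {a..y} h - integral {a..t} h = - integral {y..t} h"
      using combine[of y t] assms by (simp add: algebra_simps)
    then show ?thesis using False bound[of y t] assms by simp
  qed
qed

text \<open>The part of \<open>\<integral>\<^sub>a\<^sup>y K(y - s) g(s) ds\<close> coming from the variation of the
  kernel near the diagonal is \<open>o(y - t)\<close>.\<close>

lemma has_vector_derivative_kernel_variation:
  fixes K :: "real \<Rightarrow> 'a::banach \<Rightarrow>\<^sub>L 'b::banach" and g :: "real \<Rightarrow> 'a"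
  assumes Kc: "continuous_on UNIV K" and gc: "continuous_on {a..} g" and t: "a \<le> t"
  defines "h y s \<equiv> K (y - s) (g s) - K 0 (g s)"
  shows "((\<lambda>y. integral {a..y} (h y) - integral {a..t} (h y)) has_vector_derivative 0)
           (at t within {a..})"
proof -
  obtain M where M: "M > 0" "\<And>s. s \<in> {a..t + 1} \<Longrightarrow> norm (g s) \<le> M"
  proof -
    have "bounded (g ` {a..t + 1})"
      by (intro compact_imp_bounded compact_continuous_image continuous_on_subset[OF gc]
          compact_Icc) auto
    then show ?thesis using that unfolding bounded_pos by auto
  qed
  have small: "\<exists>d>0. \<forall>y\<in>{a..}. norm (y - t) < d \<longrightarrow>
      norm (integral {a..y} (h y) - integral {a..t} (h y)) \<le> e * norm (y - t)"
    if e: "e > 0" for e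
  proof -
    have "continuous (at 0) K" using Kc by (simp add: continuous_on_eq_continuous_at)
    moreover have "e / M > 0" using e M by simp
    ultimately obtain d where d: "d > 0" "\<And>u. dist u 0 < d \<Longrightarrow> dist (K u) (K 0) < e / M"
      unfolding continuous_at_eps_delta by blast
    have "norm (integral {a..y} (h y) - integral {a..t} (h y)) \<le> e * \<bar>y - t\<bar>"
      if y: "a \<le> y" "\<bar>y - t\<bar> < min d 1" for y
    proof (rule norm_integral_upper_diff_le[OF _ y(1) t])
      show "continuous_on {a..max y t} (h y)"
        unfolding h_def using gc
        by (auto intro!: continuous_intros blinfun.continuous_on continuous_on_compose2[OF Kc]
            elim: continuous_on_subset)
      fix s assume s: "s \<in> {min y t..max y t}"
      then have "\<bar>y - s\<bar> \<le> \<bar>y - t\<bar>" by (auto simp: min_def max_def split: if_splits)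
      then have "dist (y - s) 0 < d" using y by simp
      then have "norm (K (y - s) - K 0) \<le> e / M"
        using d(2) by (simp add: dist_norm less_imp_le)
      moreover have "norm (g s) \<le> M" using s y t by (intro M(2)) (auto simp: min_def max_def split: if_splits)
      ultimately have "norm (K (y - s) - K 0) * norm (g s) \<le> e / M * M"
        using M e by (intro mult_mono) auto
      then show "norm (h y s) \<le> e"
        unfolding h_def using M norm_blinfun[of "K (y - s) - K 0" "g s"]
        by (simp add: blinfun.diff_left)
    qed
    then show ?thesis using d(1) by (intro exI[of _ "min d 1"]) auto
  qed
  show ?thesis
    unfolding has_vector_derivative_def has_derivative_within_alt
    using small by (auto intro: bounded_linear_scaleR_left)
qed

lemma has_vector_derivative_integral_kernel:
  fixes K Kd :: "real \<Rightarrow> 'a::banach \<Rightarrow>\<^sub>L 'b::banach" and g :: "real \<Rightarrow> 'a"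
  assumes K: "\<And>w. (K has_vector_derivative Kd w) (at w)" and Kd: "continuous_on UNIV Kd"
    and gc: "continuous_on {a..b} g"
  shows "((\<lambda>t. integral {a..b} (\<lambda>s. K (t - s) (g s))) has_vector_derivative
           integral {a..b} (\<lambda>s. Kd (t0 - s) (g s))) (at t0)"
proof -
  have Kc: "continuous_on UNIV K"
    unfolding continuous_on_eq_continuous_within
    using K has_vector_derivative_continuous has_vector_derivative_at_within by blast
  have "((\<lambda>t. integral (cbox a b) (\<lambda>s. K (t - s) (g s))) has_vector_derivative
           integral (cbox a b) (\<lambda>s. Kd (t0 - s) (g s))) (at t0 within UNIV)"
  proof (rule leibniz_rule_vector_derivative)
    fix x s
    have "((\<lambda>x. K (x + - s)) has_vector_derivative Kd (x + - s)) (at x within UNIV)"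
      using K by (rule has_vector_derivative_shift) auto
    then show "((\<lambda>x. K (x - s) (g s)) has_vector_derivative Kd (x - s) (g s)) (at x within UNIV)"
      by (simp add: has_vector_derivative_blinfun_apply)
  next
    fix x :: real
    show "(\<lambda>s. K (x - s) (g s)) integrable_on cbox a b"
      using gc by (auto intro!: integrable_continuous_interval blinfun.continuous_on
          continuous_on_compose2[OF Kc] continuous_intros)
  next
    show "continuous_on (UNIV \<times> cbox a b) (\<lambda>(x, s). Kd (x - s) (g s))"
      using gc by (auto simp: case_prod_beta' intro!: blinfun.continuous_on
          continuous_on_compose2[OF Kd] continuous_intros continuous_on_compose2[OF gc])
  qed auto
  then show ?thesis by simp
qed

lemma has_vector_derivative_convolution:
  fixes K Kd :: "real \<Rightarrow> 'a::banach \<Rightarrow>\<^sub>L 'b::banach" and g :: "real \<Rightarrow> 'a"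
  assumes K: "\<And>w. (K has_vector_derivative Kd w) (at w)" and Kd: "continuous_on UNIV Kd"
    and gc: "continuous_on {a..} g" and t: "a \<le> t"
  shows "((\<lambda>y. integral {a..y} (\<lambda>s. K (y - s) (g s))) has_vector_derivative
        K 0 (g t) + integral {a..t} (\<lambda>s. Kd (t - s) (g s))) (at t within {a..})"
proof -
  have Kc: "continuous_on UNIV K"
    unfolding continuous_on_eq_continuous_within
    using K has_vector_derivative_continuous has_vector_derivative_at_within by blast
  have gcs: "continuous_on {p..q} g" if "a \<le> p" for p q
    using that by (auto intro: continuous_on_subset[OF gc])
  have int: "(\<lambda>s. K u (g s)) integrable_on {a..q}" "(\<lambda>s. K (y - s) (g s)) integrable_on {a..q}"
    for u y q
    using gcs[of a q] by (auto intro!: integrable_continuous_interval blinfun.continuous_on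
        continuous_on_compose2[OF Kc] continuous_intros)
  let ?h = "\<lambda>y s. K (y - s) (g s) - K 0 (g s)"
  let ?S = "\<lambda>y. integral {a..y} (\<lambda>s. K 0 (g s))"
  have split: "integral {a..y} (\<lambda>s. K (y - s) (g s))
      = integral {a..t} (\<lambda>s. K (y - s) (g s)) + ?S y - ?S t
        + (integral {a..y} (?h y) - integral {a..t} (?h y))" for y
    using int by (simp add: integral_diff algebra_simps)
  have fixed: "((\<lambda>y. integral {a..t} (\<lambda>s. K (y - s) (g s))) has_vector_derivative
      integral {a..t} (\<lambda>s. Kd (t - s) (g s))) (at t within {a..})"
    by (rule has_vector_derivative_at_within[OF has_vector_derivative_integral_kernel[OF K Kd gcs]])
       simp
  have upper: "(?S has_vector_derivative K 0 (g t)) (at t within {a..})"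
  proof -
    have "(?S has_vector_derivative K 0 (g t)) (at t within {a..t + 1})"
      using gcs[of a] t
      by (intro integral_has_vector_derivative blinfun.continuous_on continuous_intros) auto
    moreover have "(?S has_vector_derivative K 0 (g t)) (at t within {t + 1..})"
      by (rule has_vector_derivative_within_nonlimpt) (auto simp: islimpt_in_closure)
    moreover have "{a..t + 1} \<union> {t + 1..} = {a..}" using t by auto
    ultimately show ?thesis using has_vector_derivative_within_Un by metis
  qed
  have "((\<lambda>y. integral {a..t} (\<lambda>s. K (y - s) (g s)) + ?S y - ?S t
        + (integral {a..y} (?h y) - integral {a..t} (?h y))) has_vector_derivative
      integral {a..t} (\<lambda>s. Kd (t - s) (g s)) + K 0 (g t) - 0 + 0) (at t within {a..})"
    by (intro has_vector_derivative_add has_vector_derivative_diff fixed upper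
        has_vector_derivative_const has_vector_derivative_kernel_variation[OF Kc gc t])
  then show ?thesis unfolding split by (simp add: algebra_simps)
qed

text \<open>A kernel known only on \<open>[0, \<infinity>)\<close> is continued linearly to the left, which makes it
  differentiable everywhere with the derivative frozen at \<open>0\<close>.\<close>

lemma kernel_linear_extension:
  fixes K Kd :: "real \<Rightarrow> 'b::real_normed_vector"
  assumes K: "\<And>w. w \<ge> 0 \<Longrightarrow> (K has_vector_derivative Kd w) (at w within {0..})"
    and Kd: "continuous_on {0..} Kd"
  shows "((\<lambda>w. if 0 \<le> w then K w else K 0 + w *\<^sub>R Kd 0) has_vector_derivative Kd (max 0 w)) (at w)"
    and "continuous_on UNIV (\<lambda>w. Kd (max 0 w))"
proof -
  let ?K = "\<lambda>w. if 0 \<le> w then K w else K 0 + w *\<^sub>R Kd 0"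
  have right: "(?K has_vector_derivative Kd (max 0 w)) (at w within {0..})"
  proof (cases "w \<ge> 0")
    case True
    then show ?thesis using K[OF True]
      by (rule_tac has_vector_derivative_transform[where f=K]) auto
  qed (auto intro: has_vector_derivative_within_nonlimpt simp: islimpt_in_closure)
  have left: "(?K has_vector_derivative Kd (max 0 w)) (at w within {..0})"
  proof (cases "w \<le> 0")
    case True
    have "((\<lambda>w. K 0 + w *\<^sub>R Kd 0) has_vector_derivative 0 + (w *\<^sub>R 0 + 1 *\<^sub>R Kd 0)) (at w within {..0})"
      by (intro has_vector_derivative_add has_vector_derivative_const has_vector_derivative_scaleR
          DERIV_ident)
    moreover have "max 0 w = 0" using True by simp
    ultimately have linear: "((\<lambda>w. K 0 + w *\<^sub>R Kd 0) has_vector_derivative Kd (max 0 w))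
        (at w within {..0})"
      by simp
    have eq: "\<And>x. x \<in> {..0} \<Longrightarrow> ?K x = K 0 + x *\<^sub>R Kd 0" by auto
    show ?thesis
      by (rule has_vector_derivative_transform[OF _ eq linear]) (use True in simp)
  qed (auto intro: has_vector_derivative_within_nonlimpt simp: islimpt_in_closure)
  show "(?K has_vector_derivative Kd (max 0 w)) (at w)"
    by (rule has_vector_derivative_at_split[OF left right])
  show "continuous_on UNIV (\<lambda>w. Kd (max 0 w))"
    by (rule continuous_on_compose2[OF Kd]) (auto intro!: continuous_intros)
qed

lemma has_vector_derivative_integral_kernel_nonneg:
  fixes K Kd :: "real \<Rightarrow> 'a::banach \<Rightarrow>\<^sub>L 'b::banach" and g :: "real \<Rightarrow> 'a"
  assumes K: "\<And>w. w \<ge> 0 \<Longrightarrow> (K has_vector_derivative Kd w) (at w within {0..})"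
    and Kd: "continuous_on {0..} Kd" and gc: "continuous_on {a..b} g"
    and b: "b \<le> 0" and t: "t \<ge> 0"
  shows "((\<lambda>t. integral {a..b} (\<lambda>s. K (t - s) (g s))) has_vector_derivative
           integral {a..b} (\<lambda>s. Kd (t - s) (g s))) (at t within {0..})"
proof -
  have "((\<lambda>t. integral (cbox a b) (\<lambda>s. K (t - s) (g s))) has_vector_derivative
           integral (cbox a b) (\<lambda>s. Kd (t - s) (g s))) (at t within {0..})"
  proof (rule leibniz_rule_vector_derivative)
    fix x s :: real assume x: "x \<in> {0..}" and s: "s \<in> cbox a b"
    have "(K has_vector_derivative Kd (x + - s)) (at (x + - s) within {0..})"
      using x s b by (intro K) auto
    then have "((\<lambda>x. K (x + - s)) has_vector_derivative Kd (x + - s)) (at x within {0..})"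
      by (rule has_vector_derivative_shift) (use s b in auto)
    then show "((\<lambda>x. K (x - s) (g s)) has_vector_derivative Kd (x - s) (g s)) (at x within {0..})"
      by (simp add: has_vector_derivative_blinfun_apply)
  next
    have Kc: "continuous_on {0..} K"
      unfolding continuous_on_eq_continuous_within
      using K has_vector_derivative_continuous by blast
    fix x :: real assume "x \<in> {0..}"
    then show "(\<lambda>s. K (x - s) (g s)) integrable_on cbox a b"
      using gc b by (auto intro!: integrable_continuous_interval blinfun.continuous_on
          continuous_on_compose2[OF Kc] continuous_intros)
  next
    show "continuous_on ({0..} \<times> cbox a b) (\<lambda>(x, s). Kd (x - s) (g s))"
      using gc b by (auto simp: case_prod_beta' intro!: blinfun.continuous_on
          continuous_on_compose2[OF Kd] continuous_intros continuous_on_compose2[OF gc])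
  qed (use t in auto)
  then show ?thesis by simp
qed

lemma has_vector_derivative_convolution_nonneg:
  fixes K Kd :: "real \<Rightarrow> 'a::banach \<Rightarrow>\<^sub>L 'b::banach" and g :: "real \<Rightarrow> 'a"
  assumes K: "\<And>w. w \<ge> 0 \<Longrightarrow> (K has_vector_derivative Kd w) (at w within {0..})"
    and Kd: "continuous_on {0..} Kd" and gc: "continuous_on {a..} g" and t: "a \<le> t"
  shows "((\<lambda>t. integral {a..t} (\<lambda>s. K (t - s) (g s))) has_vector_derivative
           K 0 (g t) + integral {a..t} (\<lambda>s. Kd (t - s) (g s))) (at t within {a..})"
proof -
  let ?K = "\<lambda>w. if 0 \<le> w then K w else K 0 + w *\<^sub>R Kd 0"
  have "((\<lambda>t. integral {a..t} (\<lambda>s. ?K (t - s) (g s))) has_vector_derivative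
      ?K 0 (g t) + integral {a..t} (\<lambda>s. Kd (max 0 (t - s)) (g s))) (at t within {a..})"
    by (rule has_vector_derivative_convolution[OF kernel_linear_extension[OF K Kd] gc t])
  moreover have "integral {a..t'} (\<lambda>s. ?K (t' - s) (g s)) = integral {a..t'} (\<lambda>s. K (t' - s) (g s))"
    for t'
    by (rule integral_cong) auto
  moreover have "integral {a..t} (\<lambda>s. Kd (max 0 (t - s)) (g s))
      = integral {a..t} (\<lambda>s. Kd (t - s) (g s))"
    by (rule integral_cong) auto
  ultimately show ?thesis by simp
qed

section \<open>The solution formula\<close>

definition delay_solution ::
  "real \<Rightarrow> ('a::banach \<Rightarrow>\<^sub>L 'a) \<Rightarrow> (real \<Rightarrow> 'a) \<Rightarrow> (real \<Rightarrow> 'a) \<Rightarrow> (real \<Rightarrow> 'a) \<Rightarrow> (real \<Rightarrow> 'a) \<Rightarrow> real \<Rightarrow> 'a"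
where
  "delay_solution \<tau> \<Omega> \<phi> \<phi>' \<phi>'' f t =
     x1 \<tau> \<Omega> (t + \<tau>) (\<phi> (-2*\<tau>)) + x2 \<tau> \<Omega> (t + 2*\<tau>) (\<phi>' (-2*\<tau>))
     + integral {-2*\<tau>..0} (\<lambda>s. x2 \<tau> \<Omega> (t - s) (\<phi>'' s))
     + (if t < 0 then 0 else integral {0..t} (\<lambda>s. x2 \<tau> \<Omega> (t - s) (f s)))"

locale delay_ivp =
  fixes \<Omega> :: "'a::banach \<Rightarrow>\<^sub>L 'a"
    and \<tau> :: real
    and \<phi> \<phi>' \<phi>'' f :: "real \<Rightarrow> 'a"
  assumes iso: "is_iso \<Omega>"
    and tau: "\<tau> > 0"
    and phi1: "\<forall>t\<in>{-2*\<tau>..0}. (\<phi> has_vector_derivative \<phi>' t) (at t within {-2*\<tau>..0})"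
    and phi2: "\<forall>t\<in>{-2*\<tau>..0}. (\<phi>' has_vector_derivative \<phi>'' t) (at t within {-2*\<tau>..0})"
    and phi2c: "continuous_on {-2*\<tau>..0} \<phi>''"
    and fc: "continuous_on {0..} f"
begin

abbreviation sol :: "real \<Rightarrow> 'a" where
  "sol \<equiv> delay_solution \<tau> \<Omega> \<phi> \<phi>' \<phi>'' f"

lemma continuous_on_x2_apply:
  assumes "continuous_on {p..q} g"
  shows "continuous_on {p..q} (\<lambda>s. x2 \<tau> \<Omega> (c - s) (g s))"
  using assms
  by (auto intro!: blinfun.continuous_on continuous_on_compose2[OF x2_continuous[OF iso tau]]
      continuous_intros)

lemma integral_phi'':
  assumes t: "t \<in> {-2*\<tau>..0}"
  shows "integral {-2*\<tau>..t} \<phi>'' = \<phi>' t - \<phi>' (-2*\<tau>)"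
proof (rule integral_unique, rule fundamental_theorem_of_calculus)
  fix s assume "s \<in> {-2*\<tau>..t}"
  then have "(\<phi>' has_vector_derivative \<phi>'' s) (at s within {-2*\<tau>..0})"
    using phi2 t by auto
  then show "(\<phi>' has_vector_derivative \<phi>'' s) (at s within {-2*\<tau>..t})"
    by (rule has_vector_derivative_within_subset) (use t in auto)
qed (use t in auto)

text \<open>On the history interval the solution formula is a Taylor expansion of \<open>\<phi>\<close> around
  \<open>-2\<tau>\<close>: there \<open>x\<^sub>1 = id\<close> and \<open>x\<^sub>2\<close> has derivative \<open>id\<close>. The constant continuation of
  \<open>\<phi>''\<close> beyond \<open>0\<close> only serves to make the convolution lemma on \<open>[-2\<tau>, \<infinity>)\<close> applicable.\<close>

definition history_expansion :: "real \<Rightarrow> 'a" where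
  "history_expansion t = \<phi> (-2*\<tau>) + x2 \<tau> \<Omega> (t + 2*\<tau>) (\<phi>' (-2*\<tau>))
     + integral {-2*\<tau>..t} (\<lambda>s. x2 \<tau> \<Omega> (t - s) (\<phi>'' (min s 0)))"

lemma history_expansion_has_vector_derivative:
  assumes t: "t \<in> {-2*\<tau>..0}"
  shows "(history_expansion has_vector_derivative \<phi>' t) (at t within {-2*\<tau>..0})"
proof -
  have "(x2 \<tau> \<Omega> has_vector_derivative x1 \<tau> \<Omega> (t + 2*\<tau> - \<tau>)) (at (t + 2*\<tau>) within {0..})"
    using x2_has_vector_derivative[OF iso tau, of "t + 2*\<tau>"] t by simp
  then have "((\<lambda>t. x2 \<tau> \<Omega> (t + 2*\<tau>)) has_vector_derivative x1 \<tau> \<Omega> (t + 2*\<tau> - \<tau>))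
      (at t within {-2*\<tau>..0})"
    by (rule has_vector_derivative_shift) auto
  moreover have "x1 \<tau> \<Omega> (t + 2*\<tau> - \<tau>) = id_blinfun"
    using t tau by (intro x1_eq_id) auto
  ultimately have d1: "((\<lambda>t. x2 \<tau> \<Omega> (t + 2*\<tau>) (\<phi>' (-2*\<tau>))) has_vector_derivative \<phi>' (-2*\<tau>))
      (at t within {-2*\<tau>..0})"
    using has_vector_derivative_blinfun_apply by fastforce
  have gc: "continuous_on {-2*\<tau>..} (\<lambda>s. \<phi>'' (min s 0))"
    by (rule continuous_on_compose2[OF phi2c]) (use tau in \<open>auto intro!: continuous_intros\<close>)
  have "((\<lambda>t. integral {-2*\<tau>..t} (\<lambda>s. x2 \<tau> \<Omega> (t - s) (\<phi>'' (min s 0)))) has_vector_derivative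
     x2 \<tau> \<Omega> 0 (\<phi>'' (min t 0)) + integral {-2*\<tau>..t} (\<lambda>s. x1 \<tau> \<Omega> (t - s - \<tau>) (\<phi>'' (min s 0))))
     (at t within {-2*\<tau>..})"
    using t by (intro has_vector_derivative_convolution_nonneg x2_has_vector_derivative[OF iso tau]
        x1_delayed_continuous[OF iso tau] gc) auto
  moreover have "integral {-2*\<tau>..t} (\<lambda>s. x1 \<tau> \<Omega> (t - s - \<tau>) (\<phi>'' (min s 0)))
      = integral {-2*\<tau>..t} \<phi>''"
    using t tau by (intro integral_cong) (simp add: x1_eq_id)
  moreover have "x2 \<tau> \<Omega> 0 (\<phi>'' (min t 0)) + integral {-2*\<tau>..t} \<phi>'' = \<phi>' t - \<phi>' (-2*\<tau>)"
    using tau integral_phi''[OF t] by (simp add: x2_nonpos)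
  ultimately have "((\<lambda>t. integral {-2*\<tau>..t} (\<lambda>s. x2 \<tau> \<Omega> (t - s) (\<phi>'' (min s 0))))
      has_vector_derivative \<phi>' t - \<phi>' (-2*\<tau>)) (at t within {-2*\<tau>..})"
    by simp
  then have d2: "((\<lambda>t. integral {-2*\<tau>..t} (\<lambda>s. x2 \<tau> \<Omega> (t - s) (\<phi>'' (min s 0))))
      has_vector_derivative \<phi>' t - \<phi>' (-2*\<tau>)) (at t within {-2*\<tau>..0})"
    by (rule has_vector_derivative_within_subset) auto
  have "(history_expansion has_vector_derivative 0 + \<phi>' (-2*\<tau>) + (\<phi>' t - \<phi>' (-2*\<tau>)))
      (at t within {-2*\<tau>..0})"
    unfolding history_expansion_def[abs_def]
    by (intro has_vector_derivative_add d1 d2 has_vector_derivative_const)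
  then show ?thesis by simp
qed

lemma sol_eq_history_expansion:
  assumes t: "t \<in> {-2*\<tau>..0}"
  shows "sol t = history_expansion t"
proof -
  let ?h = "\<lambda>s. x2 \<tau> \<Omega> (t - s) (\<phi>'' s)"
  have "integral {-2*\<tau>..t} ?h + integral {t..0} ?h = integral {-2*\<tau>..0} ?h"
    using t phi2c by (intro Henstock_Kurzweil_Integration.integral_combine
        integrable_continuous_interval continuous_on_x2_apply) auto
  moreover have "integral {t..0} ?h = integral {t..0} (\<lambda>_. 0)"
    using tau by (intro integral_cong) (simp add: x2_nonpos)
  moreover have "integral {-2*\<tau>..t} ?h = integral {-2*\<tau>..t} (\<lambda>s. x2 \<tau> \<Omega> (t - s) (\<phi>'' (min s 0)))"
    using t by (intro integral_cong) auto
  moreover have "x1 \<tau> \<Omega> (t + \<tau>) = id_blinfun" using t tau by (intro x1_eq_id) auto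
  moreover have "(if t < 0 then 0 else integral {0..t} (\<lambda>s. x2 \<tau> \<Omega> (t - s) (f s))) = 0"
    using t by auto
  ultimately show ?thesis using t by (simp add: delay_solution_def history_expansion_def)
qed

lemma sol_eq_initial:
  assumes t: "t \<in> {-2*\<tau>..0}"
  shows "sol t = \<phi> t"
proof -
  have "history_expansion t - \<phi> t = 0"
  proof (rule has_vector_derivative_zero_imp_zero[OF _ _ t])
    fix s assume "s \<in> {-2*\<tau>..0}"
    then show "((\<lambda>t. history_expansion t - \<phi> t) has_vector_derivative 0) (at s within {-2*\<tau>..0})"
      using has_vector_derivative_diff[OF history_expansion_has_vector_derivative phi1[rule_format]]
      by fastforce
  qed (use tau in \<open>simp add: history_expansion_def x2_nonpos\<close>)
  then show ?thesis using sol_eq_history_expansion[OF t] by simp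
qed


lemma x1_advanced_has_vector_derivative:
  assumes t: "t \<ge> 0"
  shows "((\<lambda>t. x1 \<tau> \<Omega> (t + \<tau>) v) has_vector_derivative (\<Omega> o\<^sub>L \<Omega> o\<^sub>L x2 \<tau> \<Omega> t) v)
           (at t within {0..})"
proof -
  have "((\<lambda>w. x1 \<tau> \<Omega> (w - \<tau>)) has_vector_derivative \<Omega> o\<^sub>L \<Omega> o\<^sub>L x2 \<tau> \<Omega> (t + 2*\<tau> - 2*\<tau>))
     (at (t + 2*\<tau>) within {0..})"
    using t tau by (intro x1_delayed_has_vector_derivative iso) auto
  then have "((\<lambda>w. x1 \<tau> \<Omega> (w + 2*\<tau> - \<tau>)) has_vector_derivative
      \<Omega> o\<^sub>L \<Omega> o\<^sub>L x2 \<tau> \<Omega> (t + 2*\<tau> - 2*\<tau>)) (at t within {0..})"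
    by (rule has_vector_derivative_shift) (use tau in auto)
  then have "((\<lambda>w. x1 \<tau> \<Omega> (w + \<tau>)) has_vector_derivative \<Omega> o\<^sub>L \<Omega> o\<^sub>L x2 \<tau> \<Omega> t)
      (at t within {0..})"
    by (simp add: algebra_simps)
  then show ?thesis by (rule has_vector_derivative_blinfun_apply)
qed

lemma x2_advanced_has_vector_derivative:
  assumes t: "t \<ge> 0"
  shows "((\<lambda>t. x2 \<tau> \<Omega> (t + 2*\<tau>) v) has_vector_derivative x1 \<tau> \<Omega> (t + \<tau>) v) (at t within {0..})"
proof -
  have "(x2 \<tau> \<Omega> has_vector_derivative x1 \<tau> \<Omega> (t + 2*\<tau> - \<tau>)) (at (t + 2*\<tau>) within {0..})"
    using t tau by (intro x2_has_vector_derivative iso) auto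
  then have "((\<lambda>w. x2 \<tau> \<Omega> (w + 2*\<tau>)) has_vector_derivative x1 \<tau> \<Omega> (t + 2*\<tau> - \<tau>))
      (at t within {0..})"
    by (rule has_vector_derivative_shift) (use tau in auto)
  then have "((\<lambda>w. x2 \<tau> \<Omega> (w + 2*\<tau>)) has_vector_derivative x1 \<tau> \<Omega> (t + \<tau>)) (at t within {0..})"
    by (simp add: algebra_simps)
  then show ?thesis by (rule has_vector_derivative_blinfun_apply)
qed

definition sol_deriv :: "real \<Rightarrow> 'a" where
  "sol_deriv t = (\<Omega> o\<^sub>L \<Omega> o\<^sub>L x2 \<tau> \<Omega> t) (\<phi> (-2*\<tau>)) + x1 \<tau> \<Omega> (t + \<tau>) (\<phi>' (-2*\<tau>))
    + integral {-2*\<tau>..0} (\<lambda>s. x1 \<tau> \<Omega> (t - s - \<tau>) (\<phi>'' s))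
    + integral {0..t} (\<lambda>s. x1 \<tau> \<Omega> (t - s - \<tau>) (f s))"

definition sol_deriv2 :: "real \<Rightarrow> 'a" where
  "sol_deriv2 t = (\<Omega> o\<^sub>L \<Omega> o\<^sub>L x1 \<tau> \<Omega> (t - \<tau>)) (\<phi> (-2*\<tau>)) + (\<Omega> o\<^sub>L \<Omega> o\<^sub>L x2 \<tau> \<Omega> t) (\<phi>' (-2*\<tau>))
    + integral {-2*\<tau>..0} (\<lambda>s. (\<Omega> o\<^sub>L \<Omega> o\<^sub>L x2 \<tau> \<Omega> (t - s - 2*\<tau>)) (\<phi>'' s))
    + x1 \<tau> \<Omega> (-\<tau>) (f t)
    + integral {0..t} (\<lambda>s. (\<Omega> o\<^sub>L \<Omega> o\<^sub>L x2 \<tau> \<Omega> (t - s - 2*\<tau>)) (f s))"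

lemma sol_has_vector_derivative:
  assumes t: "t \<ge> 0"
  shows "(sol has_vector_derivative sol_deriv t) (at t within {0..})"
proof -
  have "((\<lambda>t. integral {-2*\<tau>..0} (\<lambda>s. x2 \<tau> \<Omega> (t - s) (\<phi>'' s))) has_vector_derivative
      integral {-2*\<tau>..0} (\<lambda>s. x1 \<tau> \<Omega> (t - s - \<tau>) (\<phi>'' s))) (at t within {0..})"
    using has_vector_derivative_integral_kernel_nonneg[OF x2_has_vector_derivative[OF iso tau]
      x1_delayed_continuous[OF iso tau] phi2c _ t] by simp
  moreover have "((\<lambda>t. integral {0..t} (\<lambda>s. x2 \<tau> \<Omega> (t - s) (f s))) has_vector_derivative
      x2 \<tau> \<Omega> 0 (f t) + integral {0..t} (\<lambda>s. x1 \<tau> \<Omega> (t - s - \<tau>) (f s))) (at t within {0..})"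
    using has_vector_derivative_convolution_nonneg[OF x2_has_vector_derivative[OF iso tau]
      x1_delayed_continuous[OF iso tau] fc t] by simp
  ultimately have "((\<lambda>t. x1 \<tau> \<Omega> (t + \<tau>) (\<phi> (-2*\<tau>)) + x2 \<tau> \<Omega> (t + 2*\<tau>) (\<phi>' (-2*\<tau>))
        + integral {-2*\<tau>..0} (\<lambda>s. x2 \<tau> \<Omega> (t - s) (\<phi>'' s))
        + integral {0..t} (\<lambda>s. x2 \<tau> \<Omega> (t - s) (f s))) has_vector_derivative
     (\<Omega> o\<^sub>L \<Omega> o\<^sub>L x2 \<tau> \<Omega> t) (\<phi> (-2*\<tau>)) + x1 \<tau> \<Omega> (t + \<tau>) (\<phi>' (-2*\<tau>))
     + integral {-2*\<tau>..0} (\<lambda>s. x1 \<tau> \<Omega> (t - s - \<tau>) (\<phi>'' s))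
     + (x2 \<tau> \<Omega> 0 (f t) + integral {0..t} (\<lambda>s. x1 \<tau> \<Omega> (t - s - \<tau>) (f s)))) (at t within {0..})"
    by (intro has_vector_derivative_add x1_advanced_has_vector_derivative
        x2_advanced_has_vector_derivative t)
  then have "((\<lambda>t. x1 \<tau> \<Omega> (t + \<tau>) (\<phi> (-2*\<tau>)) + x2 \<tau> \<Omega> (t + 2*\<tau>) (\<phi>' (-2*\<tau>))
        + integral {-2*\<tau>..0} (\<lambda>s. x2 \<tau> \<Omega> (t - s) (\<phi>'' s))
        + integral {0..t} (\<lambda>s. x2 \<tau> \<Omega> (t - s) (f s))) has_vector_derivative sol_deriv t)
      (at t within {0..})"
    unfolding sol_deriv_def using tau by (simp add: x2_nonpos)
  then show ?thesis
    by (rule has_vector_derivative_transform[rotated 2]) (use t in \<open>auto simp: delay_solution_def\<close>)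
qed

lemma continuous_on_Omega2_x2_delayed:
  "continuous_on S (\<lambda>w. \<Omega> o\<^sub>L \<Omega> o\<^sub>L x2 \<tau> \<Omega> (w - 2*\<tau>))"
  by (intro bounded_bilinear.continuous_on[OF bounded_bilinear_blinfun_compose] continuous_on_const
      continuous_on_compose2[OF x2_continuous[OF iso tau]] continuous_intros) auto

lemma sol_deriv_has_vector_derivative:
  assumes t: "t \<ge> 0"
  shows "(sol_deriv has_vector_derivative sol_deriv2 t) (at t within {0..})"
proof -
  have "bounded_linear (\<lambda>X. \<Omega> o\<^sub>L \<Omega> o\<^sub>L X)"
    by (rule bounded_bilinear.bounded_linear_right[OF bounded_bilinear_blinfun_compose])
  from bounded_linear.has_vector_derivative[OF this x2_has_vector_derivative[OF iso tau t]]
  have "((\<lambda>t. (\<Omega> o\<^sub>L \<Omega> o\<^sub>L x2 \<tau> \<Omega> t) (\<phi> (-2*\<tau>))) has_vector_derivative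
      (\<Omega> o\<^sub>L \<Omega> o\<^sub>L x1 \<tau> \<Omega> (t - \<tau>)) (\<phi> (-2*\<tau>))) (at t within {0..})"
    by (rule has_vector_derivative_blinfun_apply)
  moreover have "((\<lambda>t. integral {-2*\<tau>..0} (\<lambda>s. x1 \<tau> \<Omega> (t - s - \<tau>) (\<phi>'' s))) has_vector_derivative
      integral {-2*\<tau>..0} (\<lambda>s. (\<Omega> o\<^sub>L \<Omega> o\<^sub>L x2 \<tau> \<Omega> (t - s - 2*\<tau>)) (\<phi>'' s))) (at t within {0..})"
    using has_vector_derivative_integral_kernel_nonneg[where K="\<lambda>w. x1 \<tau> \<Omega> (w - \<tau>)",
      OF x1_delayed_has_vector_derivative[OF iso tau] continuous_on_Omega2_x2_delayed phi2c _ t]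
    by simp
  moreover have "((\<lambda>t. integral {0..t} (\<lambda>s. x1 \<tau> \<Omega> (t - s - \<tau>) (f s))) has_vector_derivative
      x1 \<tau> \<Omega> (0 - \<tau>) (f t) + integral {0..t} (\<lambda>s. (\<Omega> o\<^sub>L \<Omega> o\<^sub>L x2 \<tau> \<Omega> (t - s - 2*\<tau>)) (f s)))
      (at t within {0..})"
    using has_vector_derivative_convolution_nonneg[where K="\<lambda>w. x1 \<tau> \<Omega> (w - \<tau>)",
      OF x1_delayed_has_vector_derivative[OF iso tau] continuous_on_Omega2_x2_delayed fc t]
    by simp
  ultimately have "(sol_deriv has_vector_derivative
     (\<Omega> o\<^sub>L \<Omega> o\<^sub>L x1 \<tau> \<Omega> (t - \<tau>)) (\<phi> (-2*\<tau>)) + (\<Omega> o\<^sub>L \<Omega> o\<^sub>L x2 \<tau> \<Omega> t) (\<phi>' (-2*\<tau>))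
     + integral {-2*\<tau>..0} (\<lambda>s. (\<Omega> o\<^sub>L \<Omega> o\<^sub>L x2 \<tau> \<Omega> (t - s - 2*\<tau>)) (\<phi>'' s))
     + (x1 \<tau> \<Omega> (0 - \<tau>) (f t)
        + integral {0..t} (\<lambda>s. (\<Omega> o\<^sub>L \<Omega> o\<^sub>L x2 \<tau> \<Omega> (t - s - 2*\<tau>)) (f s)))) (at t within {0..})"
    unfolding sol_deriv_def[abs_def]
    by (intro has_vector_derivative_add x1_advanced_has_vector_derivative t)
  then show ?thesis unfolding sol_deriv2_def by (simp add: algebra_simps)
qed

lemma integral_Omega2_x2_apply:
  assumes "continuous_on {p..q} g"
  shows "integral {p..q} (\<lambda>s. (\<Omega> o\<^sub>L \<Omega> o\<^sub>L x2 \<tau> \<Omega> (t - s - 2*\<tau>)) (g s))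
      = \<Omega> (\<Omega> (integral {p..q} (\<lambda>s. x2 \<tau> \<Omega> (t - 2*\<tau> - s) (g s))))"
proof -
  have c: "continuous_on {p..q} (\<lambda>s. x2 \<tau> \<Omega> (t - 2*\<tau> - s) (g s))"
    by (rule continuous_on_x2_apply[OF assms])
  have "integral {p..q} (\<lambda>s. (\<Omega> o\<^sub>L \<Omega> o\<^sub>L x2 \<tau> \<Omega> (t - s - 2*\<tau>)) (g s))
      = integral {p..q} (\<lambda>s. \<Omega> (\<Omega> (x2 \<tau> \<Omega> (t - 2*\<tau> - s) (g s))))"
    by (rule integral_cong) (simp add: algebra_simps)
  also have "\<dots> = \<Omega> (\<Omega> (integral {p..q} (\<lambda>s. x2 \<tau> \<Omega> (t - 2*\<tau> - s) (g s))))"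
    using c by (simp add: integral_blinfun_apply integrable_continuous_interval
        blinfun.continuous_on[OF continuous_on_const c])
  finally show ?thesis .
qed

lemma integral_x2_delayed_forcing:
  assumes t: "t \<ge> 0"
  shows "integral {0..t} (\<lambda>s. x2 \<tau> \<Omega> (t - 2*\<tau> - s) (f s))
     = (if t - 2*\<tau> < 0 then 0 else integral {0..t - 2*\<tau>} (\<lambda>s. x2 \<tau> \<Omega> (t - 2*\<tau> - s) (f s)))"
proof -
  let ?h = "\<lambda>s. x2 \<tau> \<Omega> (t - 2*\<tau> - s) (f s)"
  have vanish: "integral {p..t} ?h = 0" if "t - 2*\<tau> \<le> p" for p
  proof -
    have "integral {p..t} ?h = integral {p..t} (\<lambda>_. 0)"
      using that tau by (intro integral_cong) (simp add: x2_nonpos)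
    then show ?thesis by simp
  qed
  show ?thesis
  proof (cases "t - 2*\<tau> < 0")
    case False
    have "integral {0..t - 2*\<tau>} ?h + integral {t - 2*\<tau>..t} ?h = integral {0..t} ?h"
      using False tau fc
      by (intro Henstock_Kurzweil_Integration.integral_combine integrable_continuous_interval
          continuous_on_x2_apply) (auto elim: continuous_on_subset)
    then show ?thesis using False vanish[of "t - 2*\<tau>"] by simp
  qed (use vanish[of 0] in auto)
qed

lemma sol_deriv2_eq:
  assumes t: "t \<ge> 0"
  shows "sol_deriv2 t = \<Omega> (\<Omega> (sol (t - 2*\<tau>))) + f t"
proof -
  have "continuous_on {0..t} f" using fc by (rule continuous_on_subset) auto
  note integrals = integral_Omega2_x2_apply[OF phi2c] integral_Omega2_x2_apply[OF this]
  have "x1 \<tau> \<Omega> (-\<tau>) = id_blinfun" using tau by (intro x1_eq_id) auto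
  moreover have "t - 2*\<tau> + \<tau> = t - \<tau>" "t - 2*\<tau> + 2*\<tau> = t" by simp_all
  ultimately show ?thesis
    unfolding sol_deriv2_def delay_solution_def integrals integral_x2_delayed_forcing[OF t]
    by (simp add: blinfun.add_right)
qed

lemma sol_deriv_0: "sol_deriv 0 = \<phi>' 0"
proof -
  have "integral {-2*\<tau>..0} (\<lambda>s. x1 \<tau> \<Omega> (0 - s - \<tau>) (\<phi>'' s)) = integral {-2*\<tau>..0} \<phi>''"
    using tau by (intro integral_cong) (simp add: x1_eq_id)
  moreover have "x1 \<tau> \<Omega> (0 + \<tau>) = id_blinfun" using tau by (intro x1_eq_id) auto
  moreover have "integral {-2*\<tau>..0} \<phi>'' = \<phi>' 0 - \<phi>' (-2*\<tau>)"
    using tau by (intro integral_phi'') auto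
  ultimately show ?thesis unfolding sol_deriv_def using tau by (simp add: x2_nonpos)
qed


definition sol_velocity :: "real \<Rightarrow> 'a" where
  "sol_velocity t = (if t \<le> 0 then \<phi>' t else sol_deriv t)"

lemma sol_velocity_nonneg: "t \<ge> 0 \<Longrightarrow> sol_velocity t = sol_deriv t"
  using sol_deriv_0 by (cases "t = 0") (auto simp: sol_velocity_def)

lemma sol_has_velocity:
  assumes t: "t \<in> {-2*\<tau>..}"
  shows "(sol has_vector_derivative sol_velocity t) (at t within {-2*\<tau>..})"
proof -
  have history: "(sol has_vector_derivative sol_velocity t) (at t within {-2*\<tau>..0})"
  proof (cases "t \<le> 0")
    case True
    then have t': "t \<in> {-2*\<tau>..0}" using t by auto
    with phi1 have \<phi>: "(\<phi> has_vector_derivative \<phi>' t) (at t within {-2*\<tau>..0})" by blast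
    have "(sol has_vector_derivative \<phi>' t) (at t within {-2*\<tau>..0})"
      by (rule has_vector_derivative_transform[OF t' sol_eq_initial \<phi>])
    then show ?thesis using True by (simp add: sol_velocity_def)
  qed (auto intro: has_vector_derivative_within_nonlimpt simp: islimpt_in_closure)
  have future: "(sol has_vector_derivative sol_velocity t) (at t within {0..})"
  proof (cases "t \<ge> 0")
    case True
    then show ?thesis using sol_has_vector_derivative sol_velocity_nonneg by simp
  qed (auto intro: has_vector_derivative_within_nonlimpt simp: islimpt_in_closure)
  have "{-2*\<tau>..0} \<union> {0..} = {-2*\<tau>..}" using tau by auto
  then show ?thesis using has_vector_derivative_within_Un[OF history future] by simp
qed

lemma sol_velocity_continuous: "continuous_on {-2*\<tau>..} sol_velocity"
proof -
  have "continuous_on {-2*\<tau>..0} \<phi>'"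
    unfolding continuous_on_eq_continuous_within
    using phi2 has_vector_derivative_continuous by blast
  then have "continuous_on {-2*\<tau>..0} sol_velocity"
    by (rule continuous_on_eq) (auto simp: sol_velocity_def)
  moreover have "continuous_on {0..} sol_deriv"
    unfolding continuous_on_eq_continuous_within
    using sol_deriv_has_vector_derivative has_vector_derivative_continuous by blast
  then have "continuous_on {0..} sol_velocity"
    by (rule continuous_on_eq) (auto simp: sol_velocity_nonneg)
  ultimately have "continuous_on ({-2*\<tau>..0} \<union> {0..}) sol_velocity"
    by (intro continuous_on_closed_Un) auto
  moreover have "{-2*\<tau>..0} \<union> {0..} = {-2*\<tau>..}" using tau by auto
  ultimately show ?thesis by simp
qed

lemma classical_solution_sol: "classical_solution \<tau> \<Omega> \<phi> f sol"
  unfolding classical_solution_def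
proof (intro exI conjI ballI)
  let ?acc = "\<lambda>t. \<Omega> (\<Omega> (sol (t - 2*\<tau>))) + f t"
  show "(sol has_vector_derivative sol_velocity t) (at t within {-2*\<tau>..})" if "t \<in> {-2*\<tau>..}" for t
    using that by (rule sol_has_velocity)
  show "continuous_on {-2*\<tau>..} sol_velocity" by (rule sol_velocity_continuous)
  show "(sol_velocity has_vector_derivative \<phi>'' t) (at t within {-2*\<tau>..0})"
    if t: "t \<in> {-2*\<tau>..0}" for t
    using phi2 t by (rule_tac has_vector_derivative_transform[OF t, where f=\<phi>'])
      (auto simp: sol_velocity_def)
  show "continuous_on {-2*\<tau>..0} \<phi>''" by (rule phi2c)
  show "(sol_velocity has_vector_derivative ?acc t) (at t within {0..})" if t: "t \<in> {0..}" for t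
    using sol_deriv_has_vector_derivative[of t] sol_deriv2_eq[of t] t
    by (rule_tac has_vector_derivative_transform[OF t, where f=sol_deriv])
      (auto simp: sol_velocity_nonneg)
  have "continuous_on {-2*\<tau>..} sol"
    unfolding continuous_on_eq_continuous_within
    using sol_has_velocity has_vector_derivative_continuous by blast
  then have "continuous_on {0..} (\<lambda>t. sol (t - 2*\<tau>))"
    by (rule continuous_on_compose2) (auto intro!: continuous_intros)
  then show "continuous_on {0..} ?acc"
    by (intro continuous_on_add fc blinfun.continuous_on[OF continuous_on_const])
  show "?acc t - \<Omega> (\<Omega> (sol (t - 2*\<tau>))) = f t" for t by simp
  show "sol t = \<phi> t" if "t \<in> {-2*\<tau>..0}" for t using that by (rule sol_eq_initial)
qed

end

section \<open>Uniqueness\<close>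

lemma delay_equation_zero_history:
  fixes d d' :: "real \<Rightarrow> 'a::real_normed_vector" and L :: "'a \<Rightarrow>\<^sub>L 'a"
  assumes r: "r > 0"
    and d: "\<And>t. t \<ge> -r \<Longrightarrow> (d has_vector_derivative d' t) (at t within {-r..})"
    and d': "\<And>t. t \<ge> 0 \<Longrightarrow> (d' has_vector_derivative L (d (t - r))) (at t within {0..})"
    and history: "\<And>t. t \<in> {-r..0} \<Longrightarrow> d t = 0"
    and t: "t \<ge> -r"
  shows "d t = 0"
proof -
  have "(d has_vector_derivative d' 0) (at 0 within {-r..0})"
    using d[of 0] r by (auto elim: has_vector_derivative_within_subset)
  then have d'0: "d' 0 = 0"
    by (rule has_vector_derivative_vanishing_right_end) (use r history in auto)
  have step: "\<forall>t\<in>{-r..real n * r}. d t = 0" for n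
  proof (induction n)
    case 0
    then show ?case using history by simp
  next
    case (Suc n)
    define T where "T = real (Suc n) * r"
    have "d' t = 0" if t: "t \<in> {0..T}" for t
    proof (rule has_vector_derivative_zero_imp_zero[where f=d', OF _ d'0 t])
      fix s assume s: "s \<in> {0..T}"
      then have "d (s - r) = 0" using Suc.IH by (auto simp: T_def algebra_simps)
      then have "(d' has_vector_derivative 0) (at s within {0..})" using d'[of s] s by simp
      then show "(d' has_vector_derivative 0) (at s within {0..T})"
        by (rule has_vector_derivative_within_subset) auto
    qed
    then have future: "d t = 0" if "t \<in> {0..T}" for t
    proof (rule_tac has_vector_derivative_zero_imp_zero[OF _ _ that])
      fix s assume s: "s \<in> {0..T}"
      then have "(d has_vector_derivative d' s) (at s within {0..T})"
        using d[of s] r by (auto elim: has_vector_derivative_within_subset)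
      then show "(d has_vector_derivative 0) (at s within {0..T})"
        using \<open>\<And>t. t \<in> {0..T} \<Longrightarrow> d' t = 0\<close> s by simp
    qed (use history r in auto)
    show ?case
    proof
      fix t assume "t \<in> {-r..real (Suc n) * r}"
      then show "d t = 0" using history future by (cases "t \<le> 0") (auto simp: T_def)
    qed
  qed
  obtain n where "t / r \<le> real n" using real_arch_simple by blast
  then have "t \<le> real n * r" using r by (simp add: field_simps)
  then show ?thesis using step[of n] t by auto
qed

lemma classical_solution_unique:
  fixes \<Omega> :: "'a::banach \<Rightarrow>\<^sub>L 'a"
  assumes tau: "\<tau> > 0"
    and x: "classical_solution \<tau> \<Omega> \<phi> f x" and y: "classical_solution \<tau> \<Omega> \<phi> f y"
    and t: "t \<in> {-2*\<tau>..}"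
  shows "x t = y t"
proof -
  obtain x' xr where X:
    "\<forall>t\<in>{-2*\<tau>..}. (x has_vector_derivative x' t) (at t within {-2*\<tau>..})"
    "\<forall>t\<in>{0..}. (x' has_vector_derivative xr t) (at t within {0..})"
    "\<forall>t\<in>{0..}. xr t - \<Omega> (\<Omega> (x (t - 2*\<tau>))) = f t"
    "\<forall>t\<in>{-2*\<tau>..0}. x t = \<phi> t"
    using x unfolding classical_solution_def by blast
  obtain y' yr where Y:
    "\<forall>t\<in>{-2*\<tau>..}. (y has_vector_derivative y' t) (at t within {-2*\<tau>..})"
    "\<forall>t\<in>{0..}. (y' has_vector_derivative yr t) (at t within {0..})"
    "\<forall>t\<in>{0..}. yr t - \<Omega> (\<Omega> (y (t - 2*\<tau>))) = f t"
    "\<forall>t\<in>{-2*\<tau>..0}. y t = \<phi> t"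
    using y unfolding classical_solution_def by blast
  have "(\<lambda>t. x t - y t) t = 0"
  proof (rule delay_equation_zero_history[where r="2*\<tau>" and d'="\<lambda>t. x' t - y' t"
        and L="\<Omega> o\<^sub>L \<Omega>"])
    fix t :: real assume "t \<ge> 0"
    then have "((\<lambda>t. x' t - y' t) has_vector_derivative xr t - yr t) (at t within {0..})"
      using X(2) Y(2) by (intro has_vector_derivative_diff) auto
    moreover have "xr t - yr t = (\<Omega> o\<^sub>L \<Omega>) (x (t - 2*\<tau>) - y (t - 2*\<tau>))"
      using X(3) Y(3) \<open>t \<ge> 0\<close> by (auto simp: blinfun.diff_right algebra_simps)
    ultimately show "((\<lambda>t. x' t - y' t) has_vector_derivative
        (\<Omega> o\<^sub>L \<Omega>) ((\<lambda>t. x t - y t) (t - 2*\<tau>))) (at t within {0..})"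
      by simp
  qed (use tau t X(1,4) Y(1,4) in \<open>auto intro: has_vector_derivative_diff\<close>)
  then show ?thesis by simp
qed

theorem mainTheorem7:
  fixes \<Omega> :: "'a::banach \<Rightarrow>\<^sub>L 'a"
    and \<tau> :: real
    and \<phi> \<phi>' \<phi>'' f :: "real \<Rightarrow> 'a"
  assumes iso: "is_iso \<Omega>"
    and tau: "\<tau> > 0"
    and phi1: "\<forall>t\<in>{-2*\<tau>..0}. (\<phi> has_vector_derivative \<phi>' t) (at t within {-2*\<tau>..0})"
    and phi2: "\<forall>t\<in>{-2*\<tau>..0}. (\<phi>' has_vector_derivative \<phi>'' t) (at t within {-2*\<tau>..0})"
    and phi2c: "continuous_on {-2*\<tau>..0} \<phi>''"
    and fc: "continuous_on {0..} f"
  shows "(\<exists>x. classical_solution \<tau> \<Omega> \<phi> f x)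
     \<and> (\<forall>x. classical_solution \<tau> \<Omega> \<phi> f x \<longrightarrow>
          (\<forall>t\<in>{-2*\<tau>..}.
             x t = x1 \<tau> \<Omega> (t + \<tau>) (\<phi> (-2*\<tau>)) + x2 \<tau> \<Omega> (t + 2*\<tau>) (\<phi>' (-2*\<tau>))
                   + integral {-2*\<tau>..0} (\<lambda>s. x2 \<tau> \<Omega> (t - s) (\<phi>'' s))
                   + (if t < 0 then 0 else integral {0..t} (\<lambda>s. x2 \<tau> \<Omega> (t - s) (f s)))))"
proof -
  interpret delay_ivp \<Omega> \<tau> \<phi> \<phi>' \<phi>'' f
    using iso tau phi1 phi2 phi2c fc by (rule delay_ivp.intro)
  have "x t = sol t" if "classical_solution \<tau> \<Omega> \<phi> f x" "t \<in> {-2*\<tau>..}" for x t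
    using classical_solution_unique[OF tau that(1) classical_solution_sol that(2)] .
  then show ?thesis
    using classical_solution_sol unfolding delay_solution_def by blast
qed

end
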